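(* Let $n\ge 2$, $\rho>0$, and let $F$ be a continuous distribution supported on the non-negative real numbers with a monotone decreasing density $f$. Then the worst-case zero-outage capacity $\underline{R^{0}}(\rho)=\log_2(1-\rho\,\phi_{-}(1))$ equals $0$.
   Context: Let $X\sim F$, $G=F^{-1}$. The function $\phi_{-}$ is defined for the distribution of $-X$, which has the increasing density $x\mapsto f(-x)$ and quantile function $G_{-}(x)=-G(1-x)$: for $a\in[0,1]$ let $H^{-}_a(x)=G_{-}(a+x)+(n-1)G_{-}(1-(n-1)x)$, $c^{-}_n(a)=\min\{c\in[0,\tfrac{1-a}{n}]: \int_c^{(1-a)/n}H^{-}_a(t)\,dt\le(\tfrac{1-a}{n}-c)H^{-}_a(c)\}$, and $\phi_{-}(a)=H^{-}_a(0)=-(G(1-a)+(n-1)G(0))$ if $c^{-}_n(a)>0$, $\phi_{-}(a)=n\,\mathbb{E}[-X\mid -X>G_{-}(a)]=-n\,\mathbb{E}[X\mid X<G(1-a)]$ if $c^{-}_n(a)=0$. The quantity $\log_2(1-\rho\phi_{-}(1-\varepsilon))$ is the smallest $\varepsilon$-outage capacity $\sup\{R\ge0:\Pr(\sum_{i=1}^n|h_i|^2<(2^R-1)/\rho)<\varepsilon\}$ over joint distributions of $(|h_1|^2,\dots,|h_n|^2)$ with each $|h_i|^2\sim F$; zero outage is $\varepsilon=0$. *)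

theory Defs
  imports "HOL-Probability.Probability"
begin

text \<open>A joint distribution of the channel gains (|h_1|^2,...,|h_n|^2) whose marginals all equal
  the distribution F: a probability measure on the product space R^{0..n-1}
  (indices 0..n-1) with every coordinate projection distributed as F.\<close>
definition joint_with_marginals :: "nat \<Rightarrow> real measure \<Rightarrow> (nat \<Rightarrow> real) measure \<Rightarrow> bool" where
  "joint_with_marginals n F P \<longleftrightarrow>
     sets P = sets (PiM {..<n} (\<lambda>_. borel)) \<and> prob_space P \<and>
     (\<forall>i<n. distr P borel (\<lambda>x. x i) = F)"

definition outage_prob :: "nat \<Rightarrow> real \<Rightarrow> (nat \<Rightarrow> real) measure \<Rightarrow> real \<Rightarrow> real" where
  "outage_prob n \<rho> P R = measure P {x \<in> space P. (\<Sum>i<n. x i) < (2 powr R - 1) / \<rho>}"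

definition zero_outage_capacity :: "nat \<Rightarrow> real \<Rightarrow> (nat \<Rightarrow> real) measure \<Rightarrow> real" where
  "zero_outage_capacity n \<rho> P = Sup {R. R \<ge> 0 \<and> outage_prob n \<rho> P R = 0}"

definition worst_zero_outage_capacity :: "nat \<Rightarrow> real \<Rightarrow> real measure \<Rightarrow> real" where
  "worst_zero_outage_capacity n \<rho> F =
     Inf {zero_outage_capacity n \<rho> P | P. joint_with_marginals n F P}"

end

theory Submission
  imports Defs
begin

text \<open>The rate 0 is always achievable without outage because the gains are almost surely
  non-negative, and the zero-outage rates are bounded because the sum of the gains lies below some
  level with positive probability; so every zero-outage capacity is \<open>\<ge> 0\<close>. Conversely, the fully
  correlated coupling \<open>|h\<^sub>1|\<^sup>2 = \<dots> = |h\<^sub>n|\<^sup>2\<close> has outage probability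
  \<open>F[0, (2\<^sup>R - 1)/(\<rho> n))\<close> at rate \<open>R\<close>, which is positive for every \<open>R > 0\<close> as soon as \<open>F\<close>
  charges every interval \<open>[0, s)\<close>; a decreasing density that is not almost everywhere zero does.\<close>

lemma (in prob_space) exists_prob_less_pos:
  fixes X :: "'a \<Rightarrow> real"
  assumes "X \<in> borel_measurable M"
  shows "\<exists>t. 0 < \<P>(x in M. X x < t)"
proof (rule ccontr)
  assume "\<not> ?thesis"
  then have "\<P>(x in M. X x < real k) = 0" for k :: nat
    by (meson measure_nonneg not_less order_antisym)
  then have "AE x in M. \<not> X x < real k" for k :: nat
    using assms by (subst prob_Collect_eq_0[symmetric]) auto
  then have "AE x in M. \<forall>k::nat. \<not> X x < real k"
    by (simp add: AE_all_countable)
  then have "AE x in M. False"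
    by eventually_elim (meson reals_Archimedean2)
  then show False
    by (simp add: AE_False)
qed

lemma joint_with_marginals_measurable_component:
  assumes "joint_with_marginals n F P" and "i < n"
  shows "(\<lambda>x. x i) \<in> borel_measurable P"
proof -
  have sets: "sets P = sets (PiM {..<n} (\<lambda>_. borel))"
    using assms(1) by (simp add: joint_with_marginals_def)
  show ?thesis
    using measurable_component_singleton[of i "{..<n}" "\<lambda>_. borel"] assms(2)
    by (simp add: measurable_cong_sets[OF sets refl])
qed

lemma joint_with_marginals_AE_nonneg:
  assumes P: "joint_with_marginals n F P" and F: "AE y in F. 0 \<le> y"
  shows "AE x in P. \<forall>i<n. 0 \<le> x i"
proof -
  have "AE x in P. 0 \<le> x i" if "i < n" for i
    using AE_distrD[OF joint_with_marginals_measurable_component[OF P that]] F P that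
    by (auto simp: joint_with_marginals_def)
  then have "AE x in P. \<forall>i\<in>{..<n}. 0 \<le> x i"
    by (intro AE_finite_allI) auto
  then show ?thesis
    by eventually_elim auto
qed

lemma outage_prob_rate_0:
  assumes P: "joint_with_marginals n F P" and F: "AE y in F. 0 \<le> y"
  shows "outage_prob n \<rho> P 0 = 0"
proof -
  interpret prob_space P
    using P by (simp add: joint_with_marginals_def)
  have "AE x in P. \<not> (\<Sum>i<n. x i) < 0"
    using joint_with_marginals_AE_nonneg[OF P F]
    by eventually_elim (auto intro!: sum_nonneg simp: not_less)
  then show ?thesis
    unfolding outage_prob_def by (simp add: prob_eq_0_AE)
qed

lemma zero_outage_rates_bdd_above:
  assumes P: "joint_with_marginals n F P" and "\<rho> > 0"
  shows "bdd_above {R. R \<ge> 0 \<and> outage_prob n \<rho> P R = 0}"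
proof -
  interpret prob_space P
    using P by (simp add: joint_with_marginals_def)
  have sum: "(\<lambda>x. \<Sum>i<n. x i) \<in> borel_measurable P"
    using joint_with_marginals_measurable_component[OF P] by auto
  then obtain t where t: "0 < \<P>(x in P. (\<Sum>i<n. x i) < t)"
    using exists_prob_less_pos by blast
  have "R \<le> log 2 (\<rho> * t + 1)" if "outage_prob n \<rho> P R = 0" for R
  proof -
    have "\<not> t \<le> (2 powr R - 1) / \<rho>"
    proof
      assume "t \<le> (2 powr R - 1) / \<rho>"
      then have "\<P>(x in P. (\<Sum>i<n. x i) < t) \<le> outage_prob n \<rho> P R"
        unfolding outage_prob_def using sum by (intro finite_measure_mono) auto
      with t that show False
        by simp
    qed
    then have "2 powr R < \<rho> * t + 1"
      using \<open>\<rho> > 0\<close> by (simp add: field_simps)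
    then have "R < log 2 (\<rho> * t + 1)"
      by (subst less_log_iff) (auto intro: order.strict_trans[of 0 "2 powr R"])
    then show ?thesis
      by simp
  qed
  then show ?thesis
    by (auto simp: bdd_above_def)
qed

lemma zero_outage_capacity_nonneg:
  assumes "joint_with_marginals n F P" and "AE y in F. 0 \<le> y" and "\<rho> > 0"
  shows "0 \<le> zero_outage_capacity n \<rho> P"
  unfolding zero_outage_capacity_def
  using assms outage_prob_rate_0 zero_outage_rates_bdd_above by (intro cSup_upper) auto

definition diagonal_coupling :: "nat \<Rightarrow> real measure \<Rightarrow> (nat \<Rightarrow> real) measure" where
  "diagonal_coupling n F = distr F (PiM {..<n} (\<lambda>_. borel)) (\<lambda>y. \<lambda>i\<in>{..<n}. y)"

lemma measurable_diagonal:
  assumes "sets F = sets borel"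
  shows "(\<lambda>y. \<lambda>i\<in>I. y) \<in> F \<rightarrow>\<^sub>M PiM I (\<lambda>_. borel)"
  by (intro measurable_restrict) (simp add: measurable_ident_sets[OF assms])

lemma joint_with_marginals_diagonal_coupling:
  assumes sF: "sets F = sets borel" and "prob_space F"
  shows "joint_with_marginals n F (diagonal_coupling n F)"
  unfolding joint_with_marginals_def
proof (intro conjI allI impI)
  interpret F: prob_space F by fact
  note diag = measurable_diagonal[OF sF, of "{..<n}"]
  show "sets (diagonal_coupling n F) = sets (PiM {..<n} (\<lambda>_. borel))"
    by (simp add: diagonal_coupling_def)
  show "prob_space (diagonal_coupling n F)"
    unfolding diagonal_coupling_def by (rule F.prob_space_distr[OF diag])
  fix i assume "i < n"
  then have "distr (diagonal_coupling n F) borel (\<lambda>x. x i) = distr F borel (\<lambda>y. y)"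
    unfolding diagonal_coupling_def using diag by (subst distr_distr) (auto simp: comp_def)
  also have "\<dots> = F"
    using sF by (simp add: distr_id2)
  finally show "distr (diagonal_coupling n F) borel (\<lambda>x. x i) = F" .
qed

lemma outage_prob_diagonal_coupling:
  assumes sF: "sets F = sets borel" and "n > 0"
  shows "outage_prob n \<rho> (diagonal_coupling n F) R = measure F {..<(2 powr R - 1) / \<rho> / n}"
proof -
  define t where "t = (2 powr R - 1) / \<rho>"
  define A where "A = {x \<in> space (PiM {..<n} (\<lambda>_. borel)). (\<Sum>i<n. x i) < t}"
  have "A \<in> sets (PiM {..<n} (\<lambda>_. borel))"
    unfolding A_def by measurable
  have "outage_prob n \<rho> (diagonal_coupling n F) R = measure (diagonal_coupling n F) A"
    by (simp add: outage_prob_def diagonal_coupling_def A_def t_def)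
  also have "\<dots> = measure F ((\<lambda>y. \<lambda>i\<in>{..<n}. y) -` A \<inter> space F)"
    unfolding diagonal_coupling_def using \<open>A \<in> sets _\<close> measurable_diagonal[OF sF]
    by (rule measure_distr[rotated])
  also have "(\<lambda>y. \<lambda>i\<in>{..<n}. y) -` A \<inter> space F = {..<t / n}"
    using \<open>n > 0\<close> sets_eq_imp_space_eq[OF sF] by (auto simp: A_def space_PiM field_simps)
  finally show ?thesis
    by (simp add: t_def)
qed

lemma zero_outage_capacity_diagonal_coupling:
  assumes sF: "sets F = sets borel" and "prob_space F" and "n > 0" and "\<rho> > 0"
    and "AE y in F. 0 \<le> y" and pos: "\<And>s. s > 0 \<Longrightarrow> 0 < measure F {..<s}"
  shows "zero_outage_capacity n \<rho> (diagonal_coupling n F) = 0"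
proof -
  have "R = 0" if "R \<ge> 0" and "outage_prob n \<rho> (diagonal_coupling n F) R = 0" for R
  proof (rule ccontr)
    assume "R \<noteq> 0"
    then have "0 < (2 powr R - 1) / \<rho> / n"
      using \<open>R \<ge> 0\<close> \<open>\<rho> > 0\<close> \<open>n > 0\<close> by simp
    from pos[OF this] that(2) show False
      by (simp add: outage_prob_diagonal_coupling[OF sF \<open>n > 0\<close>])
  qed
  moreover have "outage_prob n \<rho> (diagonal_coupling n F) 0 = 0"
    using outage_prob_rate_0 joint_with_marginals_diagonal_coupling assms by blast
  ultimately have "{R. R \<ge> 0 \<and> outage_prob n \<rho> (diagonal_coupling n F) R = 0} = {0}"
    by auto
  then show ?thesis
    by (simp add: zero_outage_capacity_def)
qed

lemma worst_zero_outage_capacity_eq_0: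
  assumes "sets F = sets borel" and "prob_space F" and "n > 0" and "\<rho> > 0"
    and "AE y in F. 0 \<le> y" and "\<And>s. s > 0 \<Longrightarrow> 0 < measure F {..<s}"
  shows "worst_zero_outage_capacity n \<rho> F = 0"
  unfolding worst_zero_outage_capacity_def
proof (rule cInf_eq_minimum)
  have "joint_with_marginals n F (diagonal_coupling n F)"
    and "zero_outage_capacity n \<rho> (diagonal_coupling n F) = 0"
    using joint_with_marginals_diagonal_coupling zero_outage_capacity_diagonal_coupling assms
    by blast+
  then show "0 \<in> {zero_outage_capacity n \<rho> P | P. joint_with_marginals n F P}"
    by force
next
  fix c assume "c \<in> {zero_outage_capacity n \<rho> P | P. joint_with_marginals n F P}"
  then show "0 \<le> c"
    using zero_outage_capacity_nonneg assms(4,5) by blast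
qed

lemma emeasure_decreasing_density_lessThan_pos:
  fixes f :: "real \<Rightarrow> real"
  assumes f: "f \<in> borel_measurable borel"
    and zero: "\<And>x. x < 0 \<Longrightarrow> f x = 0"
    and decr: "\<And>x y. 0 \<le> x \<Longrightarrow> x \<le> y \<Longrightarrow> f y \<le> f x"
    and nontrivial: "(\<integral>\<^sup>+ x. ennreal (f x) \<partial>lborel) \<noteq> 0"
    and "s > 0"
  shows "0 < emeasure (density lborel (\<lambda>x. ennreal (f x))) {..<s}"
proof -
  have "\<exists>x0>0. f x0 > 0"
  proof (rule ccontr)
    assume "\<not> ?thesis"
    then have off_0: "ennreal (f x) = 0" if "x \<noteq> 0" for x
      using that zero by (metis ennreal_eq_0_iff linorder_neqE not_less order_refl)
    have "AE x in lborel. ennreal (f x) = 0"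
      using AE_lborel_singleton[of 0] by (rule eventually_mono) (rule off_0)
    with nontrivial show False
      by (simp add: nn_integral_cong_AE)
  qed
  then obtain x0 where "x0 > 0" and "f x0 > 0"
    by blast
  define a where "a = min s x0"
  have "0 < ennreal (f x0) * ennreal a"
    using \<open>x0 > 0\<close> \<open>f x0 > 0\<close> \<open>s > 0\<close> by (simp add: a_def ennreal_mult[symmetric])
  also have "\<dots> = (\<integral>\<^sup>+ x. ennreal (f x0) * indicator {0..<a} x \<partial>lborel)"
    using \<open>x0 > 0\<close> \<open>s > 0\<close> by (simp add: a_def nn_integral_cmult_indicator)
  also have "\<dots> \<le> (\<integral>\<^sup>+ x. ennreal (f x) * indicator {..<s} x \<partial>lborel)"
    by (intro nn_integral_mono) (auto simp: a_def indicator_def intro!: ennreal_leI decr)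
  also have "\<dots> = emeasure (density lborel (\<lambda>x. ennreal (f x))) {..<s}"
    using f by (simp add: emeasure_density)
  finally show ?thesis .
qed

theorem proposition2:
  fixes n :: nat and \<rho> :: real and f :: "real \<Rightarrow> real"
  assumes "n \<ge> 2" and "\<rho> > 0"
    and "f \<in> borel_measurable borel"
    and "\<And>x. f x \<ge> 0"
    and "\<And>x. x < 0 \<Longrightarrow> f x = 0"
    and "\<And>x y. 0 \<le> x \<Longrightarrow> x \<le> y \<Longrightarrow> f y \<le> f x"
    and "(\<integral>\<^sup>+ x. ennreal (f x) \<partial>lborel) = 1"
  shows "worst_zero_outage_capacity n \<rho> (density lborel (\<lambda>x. ennreal (f x))) = 0"
proof -
  define F where "F = density lborel (\<lambda>x. ennreal (f x))"
  have sets: "sets F = sets borel"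
    by (simp add: F_def)
  interpret F: prob_space F
    by standard (use assms(3,7) in \<open>simp add: F_def emeasure_density\<close>)
  have "0 \<le> y" if "f y > 0" for y
    using that assms(5) by (metis not_le order_less_irrefl)
  then have "AE y in F. 0 \<le> y"
    unfolding F_def using assms(3) by (subst AE_density) auto
  moreover have "0 < measure F {..<s}" if "s > 0" for s
    using emeasure_decreasing_density_lessThan_pos[OF assms(3,5,6) _ that] assms(7)
    by (simp add: F_def[symmetric] F.emeasure_eq_measure)
  ultimately show ?thesis
    using worst_zero_outage_capacity_eq_0[OF sets F.prob_space_axioms _ assms(2)] assms(1)
    by (simp add: F_def)
qed

end
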